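(* In the setting below, $\hat{w}_t$ is strictly increasing in $t$. Also, if $\eta \geq \eta_0$, then $\hat{w}_t \geq \gamma\eta/2 + \gamma(t-1)/16$ for all integers $1 \leq t \leq \tau$, and in particular $\hat{w}_t \geq 8\tilde{\lambda}$ for all $t \geq 1$.
   Context: Dimension $d=2$. Data $x_1,\dots,x_n\in\mathbb{R}^2$ with $\|x_i\|\le 1$, linearly separable (some $w$ has $\langle w,x_i\rangle>0$ for all $i$). $F(w) = \frac{1}{n}\sum_{i=1}^n \log(1+\exp(-\langle w, x_i\rangle))$. Maximum margin $\gamma = \max_{\|w\|=1}\min_i \langle w, x_i\rangle$ with maximizer the unit vector $w_*$. Gradient descent: $w_0=0$, $w_{t+1} = w_t - \eta\nabla F(w_t)$ with constant $\eta>0$. $\hat{w}_t = \langle w_t, w_*\rangle$. $\tau = \min\{t\ge 0: F(w_t)\le 1/(8\eta)\}$. $\eta_0 = \max(n, \frac{32}{\gamma^2}\log\frac{256}{\gamma^2})$. $\tilde{\lambda} = \log(8\eta)/\gamma$. *)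

theory Defs
  imports "HOL-Analysis.Analysis" "HOL-Library.Extended_Nat"
begin

definition logloss :: "(nat \<Rightarrow> real^2) \<Rightarrow> nat \<Rightarrow> real^2 \<Rightarrow> real" where
  "logloss x n w = (1 / real n) * (\<Sum>i<n. ln (1 + exp (- (w \<bullet> x i))))"

definition grad :: "(real^2 \<Rightarrow> real) \<Rightarrow> real^2 \<Rightarrow> real^2" where
  "grad f w = (SOME g. (f has_derivative (\<lambda>h. g \<bullet> h)) (at w))"

primrec gd :: "(real^2 \<Rightarrow> real) \<Rightarrow> real \<Rightarrow> nat \<Rightarrow> real^2" where
  "gd f eta 0 = 0"
| "gd f eta (Suc t) = gd f eta t - eta *\<^sub>R grad f (gd f eta t)"

definition margin :: "(nat \<Rightarrow> real^2) \<Rightarrow> nat \<Rightarrow> real" where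
  "margin x n = (SUP w \<in> {w :: real^2. norm w = 1}. Min ((\<lambda>i. w \<bullet> x i) ` {..<n}))"

definition tau :: "(nat \<Rightarrow> real^2) \<Rightarrow> nat \<Rightarrow> real \<Rightarrow> enat" where
  "tau x n eta = (if \<exists>t. logloss x n (gd (logloss x n) eta t) \<le> 1 / (8 * eta)
     then enat (LEAST t. logloss x n (gd (logloss x n) eta t) \<le> 1 / (8 * eta))
     else \<infinity>)"

definition eta0 :: "(nat \<Rightarrow> real^2) \<Rightarrow> nat \<Rightarrow> real" where
  "eta0 x n = max (real n) (32 / (margin x n)^2 * ln (256 / (margin x n)^2))"

definition lambda_tilde :: "(nat \<Rightarrow> real^2) \<Rightarrow> nat \<Rightarrow> real \<Rightarrow> real" where
  "lambda_tilde x n eta = ln (8 * eta) / margin x n"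

end

theory Submission imports Defs begin

(* Along any direction u, a gradient step on the logistic risk changes <w, u> by
   eta/n * sum_i <x_i, u> / (1 + exp <w, x_i>).  For u = w_* every <x_i, u> is at least
   gamma > 0, so <w_t, w_*> increases by at least eta * gamma times the mean of the weights
   1 / (1 + exp <w_t, x_i>).  This mean is 1/2 at w_0 = 0, giving w_1 >= gamma eta / 2, and it is
   always at least min (F(w)/2, 1/(2n)); before tau we have F(w_t) > 1/(8 eta) and eta >= n, so
   the increments are at least gamma/16.  Finally eta >= 32/gamma^2 ln (256/gamma^2) makes
   gamma eta / 2 >= 8 ln (8 eta) / gamma. *)

lemma logistic_loss_has_real_derivative:
  "((\<lambda>z. ln (1 + exp (- z))) has_real_derivative - (1 / (1 + exp z))) (at z)"
proof -
  have "((\<lambda>z. ln (1 + exp (- z))) has_real_derivative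
      1 / (1 + exp (- z)) * (exp (- z) * - 1)) (at z)"
    by (auto intro!: derivative_eq_intros simp: add_pos_pos)
  moreover have "1 / (1 + exp (- z)) * (exp (- z) * - 1) = - (1 / (1 + exp z))"
    by (simp add: exp_minus field_simps add_pos_pos)
  ultimately show ?thesis by simp
qed

lemma logloss_has_derivative:
  "(logloss x n has_derivative
     (\<lambda>h. (- ((1 / real n) *\<^sub>R (\<Sum>i<n. (1 / (1 + exp (w \<bullet> x i))) *\<^sub>R x i))) \<bullet> h)) (at w)"
proof -
  have summand: "((\<lambda>w. ln (1 + exp (- (w \<bullet> x i)))) has_derivative
      (\<lambda>h. - (1 / (1 + exp (w \<bullet> x i))) * (h \<bullet> x i))) (at w)" for i
    using DERIV_compose_FDERIV[OF logistic_loss_has_real_derivative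
        has_derivative_inner_left[OF has_derivative_ident]]
    by (simp add: mult.commute)
  have "((\<lambda>w. (1 / real n) * (\<Sum>i<n. ln (1 + exp (- (w \<bullet> x i))))) has_derivative
      (\<lambda>h. (1 / real n) * (\<Sum>i<n. - (1 / (1 + exp (w \<bullet> x i))) * (h \<bullet> x i)))) (at w)"
    by (intro has_derivative_mult_right has_derivative_sum summand)
  moreover have "(\<lambda>h. (1 / real n) * (\<Sum>i<n. - (1 / (1 + exp (w \<bullet> x i))) * (h \<bullet> x i))) =
      (\<lambda>h. (- ((1 / real n) *\<^sub>R (\<Sum>i<n. (1 / (1 + exp (w \<bullet> x i))) *\<^sub>R x i))) \<bullet> h)"
    by (rule ext) (simp add: inner_sum_right sum_divide_distrib inner_commute sum_negf)
  ultimately show ?thesis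
    unfolding logloss_def[abs_def] by simp
qed

lemma grad_eqI:
  assumes "(f has_derivative (\<lambda>h. g \<bullet> h)) (at w)"
  shows "grad f w = g"
proof -
  have "(f has_derivative (\<lambda>h. grad f w \<bullet> h)) (at w)"
    unfolding grad_def by (rule someI, rule assms)
  then have "(\<lambda>h. grad f w \<bullet> h) = (\<lambda>h. g \<bullet> h)"
    using assms by (rule has_derivative_unique)
  then have "grad f w \<bullet> (grad f w - g) = g \<bullet> (grad f w - g)"
    by metis
  then have "(grad f w - g) \<bullet> (grad f w - g) = 0"
    by (simp only: inner_diff_left)
  then show ?thesis
    by (simp only: inner_eq_zero_iff right_minus_eq)
qed

lemma grad_logloss:
  "grad (logloss x n) w = - ((1 / real n) *\<^sub>R (\<Sum>i<n. (1 / (1 + exp (w \<bullet> x i))) *\<^sub>R x i))"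
  by (rule grad_eqI, rule logloss_has_derivative)

lemma gd_logloss_Suc_inner:
  "gd (logloss x n) eta (Suc t) \<bullet> u = gd (logloss x n) eta t \<bullet> u +
     eta * ((1 / real n) * (\<Sum>i<n. 1 / (1 + exp (gd (logloss x n) eta t \<bullet> x i)) * (x i \<bullet> u)))"
  by (simp add: grad_logloss inner_diff_left inner_sum_left algebra_simps)

lemma gd_logloss_inner_Suc_ge:
  assumes margin: "\<forall>i<n. \<gamma> \<le> x i \<bullet> u" and "eta \<ge> 0"
  shows "gd (logloss x n) eta t \<bullet> u +
      eta * \<gamma> * ((1 / real n) * (\<Sum>i<n. 1 / (1 + exp (gd (logloss x n) eta t \<bullet> x i))))
    \<le> gd (logloss x n) eta (Suc t) \<bullet> u"
proof -
  define d where "d i = 1 / (1 + exp (gd (logloss x n) eta t \<bullet> x i))" for i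
  have "(\<Sum>i<n. d i * \<gamma>) \<le> (\<Sum>i<n. d i * (x i \<bullet> u))"
    using margin by (intro sum_mono mult_left_mono) (auto simp: d_def add_pos_pos less_imp_le)
  then have "\<gamma> * (\<Sum>i<n. d i) \<le> (\<Sum>i<n. d i * (x i \<bullet> u))"
    by (simp add: sum_distrib_left mult.commute)
  then have "eta * \<gamma> * ((1 / real n) * (\<Sum>i<n. d i)) \<le> eta * ((1 / real n) * (\<Sum>i<n. d i * (x i \<bullet> u)))"
    using \<open>eta \<ge> 0\<close> by (simp add: mult_left_mono divide_right_mono mult.assoc)
  then show ?thesis
    unfolding gd_logloss_Suc_inner[of x n eta t u] d_def by linarith
qed

lemma logistic_weight_ge_loss:
  fixes z :: real
  shows "min (ln (1 + exp (- z))) 1 / 2 \<le> 1 / (1 + exp z)"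
proof -
  define u where "u = exp (- z)"
  have "u > 0" by (simp add: u_def)
  have weight: "1 / (1 + exp z) = u / (1 + u)"
    unfolding u_def by (simp add: exp_minus field_simps add_pos_pos)
  show ?thesis
  proof (cases "u \<le> 1")
    case True
    have "ln (1 + u) \<le> u" using \<open>u > 0\<close> by (simp add: ln_add_one_self_le_self)
    moreover have "u / 2 \<le> u / (1 + u)" using True \<open>u > 0\<close> by (simp add: field_simps)
    ultimately show ?thesis using weight u_def by simp
  next
    case False
    then have "1 / 2 \<le> u / (1 + u)" by (simp add: field_simps)
    then show ?thesis using weight by linarith
  qed
qed

lemma mean_logistic_weight_ge:
  assumes "n \<ge> 1"
  shows "min (logloss x n w / 2) (1 / (2 * real n))
    \<le> (1 / real n) * (\<Sum>i<n. 1 / (1 + exp (w \<bullet> x i)))"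
proof (cases "\<exists>j<n. 1 \<le> ln (1 + exp (- (w \<bullet> x j)))")
  case True
  then obtain j where "j < n" and "1 \<le> ln (1 + exp (- (w \<bullet> x j)))" by blast
  then have "1 / 2 \<le> 1 / (1 + exp (w \<bullet> x j))"
    using logistic_weight_ge_loss[of "w \<bullet> x j"] by simp
  also have "\<dots> \<le> (\<Sum>i<n. 1 / (1 + exp (w \<bullet> x i)))"
    using \<open>j < n\<close> by (intro member_le_sum) (auto simp: add_pos_pos less_imp_le)
  finally show ?thesis
    using assms by (simp add: field_simps min_le_iff_disj)
next
  case False
  have "(\<Sum>i<n. ln (1 + exp (- (w \<bullet> x i))) / 2) \<le> (\<Sum>i<n. 1 / (1 + exp (w \<bullet> x i)))"
  proof (rule sum_mono)
    fix i assume "i \<in> {..<n}"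
    then have "ln (1 + exp (- (w \<bullet> x i))) < 1" using False by auto
    then show "ln (1 + exp (- (w \<bullet> x i))) / 2 \<le> 1 / (1 + exp (w \<bullet> x i))"
      using logistic_weight_ge_loss[of "w \<bullet> x i"] by (simp add: min_def)
  qed
  then have "logloss x n w / 2 \<le> (1 / real n) * (\<Sum>i<n. 1 / (1 + exp (w \<bullet> x i)))"
    unfolding logloss_def using assms
    by (simp add: sum_divide_distrib[symmetric] field_simps)
  then show ?thesis
    by (simp add: min_le_iff_disj)
qed

lemma gd_logloss_inner_strict_mono:
  assumes "n \<ge> 1" and "\<forall>i<n. \<gamma> \<le> x i \<bullet> u" and "\<gamma> > 0" and "eta > 0"
  shows "strict_mono (\<lambda>t. gd (logloss x n) eta t \<bullet> u)"
proof (rule strict_monoI_Suc)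
  fix t
  have "0 < (\<Sum>i<n. 1 / (1 + exp (gd (logloss x n) eta t \<bullet> x i)))"
    using \<open>n \<ge> 1\<close> by (intro sum_pos) (auto simp: add_pos_pos lessThan_empty_iff)
  then have "0 < eta * \<gamma> * ((1 / real n) * (\<Sum>i<n. 1 / (1 + exp (gd (logloss x n) eta t \<bullet> x i))))"
    using assms by simp
  then show "gd (logloss x n) eta t \<bullet> u < gd (logloss x n) eta (Suc t) \<bullet> u"
    using gd_logloss_inner_Suc_ge[OF assms(2), where eta=eta and t=t] assms by linarith
qed

lemma gd_logloss_inner_one_ge:
  assumes "n \<ge> 1" and "\<forall>i<n. \<gamma> \<le> x i \<bullet> u" and "eta \<ge> 0"
  shows "\<gamma> * eta / 2 \<le> gd (logloss x n) eta 1 \<bullet> u"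
proof -
  have "(1 / real n) * (\<Sum>i<n. 1 / (1 + exp (gd (logloss x n) eta 0 \<bullet> x i))) = 1 / 2"
    using \<open>n \<ge> 1\<close> by simp
  then show ?thesis
    using gd_logloss_inner_Suc_ge[OF assms(2), where eta=eta and t=0] assms by (simp add: mult.commute)
qed

lemma gd_logloss_inner_Suc_ge_before_tau:
  assumes "n \<ge> 1" and "\<forall>i<n. \<gamma> \<le> x i \<bullet> u" and "\<gamma> \<ge> 0" and "real n \<le> eta"
    and loss: "logloss x n (gd (logloss x n) eta t) > 1 / (8 * eta)"
  shows "gd (logloss x n) eta t \<bullet> u + \<gamma> / 16 \<le> gd (logloss x n) eta (Suc t) \<bullet> u"
proof -
  let ?mean = "(1 / real n) * (\<Sum>i<n. 1 / (1 + exp (gd (logloss x n) eta t \<bullet> x i)))"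
  have "eta > 0" using assms by linarith
  have "1 / (16 * eta) \<le> 1 / (2 * real n)"
    using assms by (simp add: field_simps)
  moreover have "1 / (16 * eta) \<le> logloss x n (gd (logloss x n) eta t) / 2"
    using loss by simp
  ultimately have "1 / (16 * eta) \<le> ?mean"
    using mean_logistic_weight_ge[OF \<open>n \<ge> 1\<close>] by (meson min.boundedI order_trans)
  then have "\<gamma> / 16 \<le> eta * \<gamma> * ?mean"
    using \<open>eta > 0\<close> \<open>\<gamma> \<ge> 0\<close> mult_left_mono[of "1 / (16 * eta)" ?mean "eta * \<gamma>"] by simp
  then show ?thesis
    using gd_logloss_inner_Suc_ge[OF assms(2), where eta=eta and t=t] assms by linarith
qed

lemma logloss_gt_before_tau:
  assumes "enat t < tau x n eta"
  shows "logloss x n (gd (logloss x n) eta t) > 1 / (8 * eta)"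
proof (cases "\<exists>s. logloss x n (gd (logloss x n) eta s) \<le> 1 / (8 * eta)")
  case True
  then have "t < (LEAST s. logloss x n (gd (logloss x n) eta s) \<le> 1 / (8 * eta))"
    using assms by (simp add: tau_def)
  then show ?thesis
    using not_less_Least by fastforce
qed (simp add: not_le)

lemma gd_logloss_inner_ge_until_tau:
  assumes "n \<ge> 1" and "\<forall>i<n. \<gamma> \<le> x i \<bullet> u" and "\<gamma> \<ge> 0" and "real n \<le> eta"
    and "1 \<le> t" and "enat t \<le> tau x n eta"
  shows "\<gamma> * eta / 2 + \<gamma> * (real t - 1) / 16 \<le> gd (logloss x n) eta t \<bullet> u"
proof -
  have "enat (Suc k) \<le> tau x n eta \<Longrightarrow>
      \<gamma> * eta / 2 + \<gamma> * real k / 16 \<le> gd (logloss x n) eta (Suc k) \<bullet> u" for k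
  proof (induction k)
    case 0
    show ?case using gd_logloss_inner_one_ge[where eta=eta] assms by simp
  next
    case (Suc k)
    then have "enat (Suc k) < tau x n eta"
      by (meson Suc_n_not_le_n enat_ord_simps(2) order_le_less_trans not_le)
    then have "gd (logloss x n) eta (Suc k) \<bullet> u + \<gamma> / 16 \<le> gd (logloss x n) eta (Suc (Suc k)) \<bullet> u"
      using assms by (intro gd_logloss_inner_Suc_ge_before_tau logloss_gt_before_tau)
    moreover have "\<gamma> * eta / 2 + \<gamma> * real k / 16 \<le> gd (logloss x n) eta (Suc k) \<bullet> u"
      using Suc \<open>enat (Suc k) < tau x n eta\<close> by simp
    ultimately show ?case
      by (simp add: field_simps)
  qed
  from this[of "t - 1"] show ?thesis
    using assms by (simp add: of_nat_diff)
qed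

lemma ln_le_linear_above_threshold:
  fixes a eta :: real
  assumes "0 < a" "a \<le> 1" and eta: "32 / a * ln (256 / a) \<le> eta"
  shows "16 * ln (8 * eta) \<le> a * eta"
proof -
  define L where "L = ln (256 / a)"
  define A where "A = 32 / a * L"
  have "L \<ge> 1"
  proof -
    have "exp 1 \<le> (3::real)" using exp_le by simp
    also have "3 \<le> 256 / a" using assms by (simp add: field_simps)
    finally show ?thesis using assms by (simp add: L_def ln_ge_iff)
  qed
  have "A > 0" using \<open>L \<ge> 1\<close> \<open>a > 0\<close> by (simp add: A_def)
  have "A \<le> eta" using eta by (simp add: A_def L_def)
  \<comment> \<open>Tangent-line bound for ln at the threshold A.\<close>
  have "ln (eta / A) \<le> eta / A - 1"
    using \<open>A > 0\<close> \<open>A \<le> eta\<close> by (intro ln_le_minus_one) simp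
  then have tangent: "ln (8 * eta) \<le> ln (8 * A) + (eta - A) / A"
    using \<open>A > 0\<close> \<open>A \<le> eta\<close> by (simp add: ln_div ln_mult diff_divide_distrib)
  have "ln (256 / a * L) = ln (256 / a) + ln L"
    using \<open>L \<ge> 1\<close> \<open>a > 0\<close> by (intro ln_mult_pos) simp_all
  moreover have "8 * A = 256 / a * L" by (simp add: A_def)
  ultimately have "ln (8 * A) = L + ln L"
    by (simp add: L_def)
  moreover have "ln L \<le> L" using \<open>L \<ge> 1\<close> ln_le_minus_one[of L] by simp
  ultimately have "16 * ln (8 * A) \<le> a * A"
    using \<open>a > 0\<close> by (simp add: A_def)
  moreover have "16 * ((eta - A) / A) \<le> a * eta - a * A"
  proof -
    have "16 / A \<le> a" using \<open>a > 0\<close> \<open>L \<ge> 1\<close> by (simp add: A_def field_simps)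
    then have "16 / A * (eta - A) \<le> a * (eta - A)"
      using \<open>A \<le> eta\<close> by (intro mult_right_mono) simp_all
    then show ?thesis using \<open>A > 0\<close> by (simp add: right_diff_distrib diff_divide_distrib)
  qed
  ultimately show ?thesis
    using tangent by linarith
qed

lemma Min_inner_le_one:
  fixes x :: "nat \<Rightarrow> real^2" and u :: "real^2"
  assumes "n \<ge> 1" and "\<forall>i<n. norm (x i) \<le> 1" and "norm u = 1"
  shows "Min ((\<lambda>i. u \<bullet> x i) ` {..<n}) \<le> 1"
proof -
  have "Min ((\<lambda>i. u \<bullet> x i) ` {..<n}) \<le> u \<bullet> x 0"
    using assms by (intro Min_le) auto
  also have "\<dots> \<le> norm u * norm (x 0)" by (rule norm_cauchy_schwarz)
  also have "\<dots> \<le> 1" using assms by simp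
  finally show ?thesis .
qed

lemma margin_le_one:
  assumes "n \<ge> 1" and "\<forall>i<n. norm (x i) \<le> 1"
  shows "margin x n \<le> 1"
  unfolding margin_def
proof (rule cSUP_least)
  show "{w :: real^2. norm w = 1} \<noteq> {}"
    using norm_axis_1 by blast
qed (use assms Min_inner_le_one in auto)

lemma margin_pos:
  assumes "n \<ge> 1" and "\<forall>i<n. norm (x i) \<le> 1" and "\<exists>w :: real^2. \<forall>i<n. w \<bullet> x i > 0"
  shows "margin x n > 0"
proof -
  obtain w :: "real^2" where w: "\<forall>i<n. w \<bullet> x i > 0" using assms by blast
  then have "w \<noteq> 0" using \<open>n \<ge> 1\<close> by fastforce
  define v where "v = w /\<^sub>R norm w"
  have "norm v = 1" using \<open>w \<noteq> 0\<close> by (simp add: v_def)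
  have "0 < Min ((\<lambda>i. v \<bullet> x i) ` {..<n})"
    using w \<open>w \<noteq> 0\<close> \<open>n \<ge> 1\<close> by (subst Min_gr_iff) (auto simp: v_def lessThan_empty_iff)
  also have "\<dots> \<le> margin x n"
    unfolding margin_def
  proof (rule cSUP_upper)
    show "bdd_above ((\<lambda>w. Min ((\<lambda>i. w \<bullet> x i) ` {..<n})) ` {w. norm w = 1})"
      using assms Min_inner_le_one by (intro bdd_aboveI2) auto
  qed (use \<open>norm v = 1\<close> in simp)
  finally show ?thesis .
qed

lemma eight_lambda_tilde_le:
  assumes "n \<ge> 1" and "\<forall>i<n. norm (x i) \<le> 1" and "\<exists>w :: real^2. \<forall>i<n. w \<bullet> x i > 0"
    and "eta \<ge> eta0 x n"
  shows "8 * lambda_tilde x n eta \<le> margin x n * eta / 2"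
proof -
  have "margin x n > 0" "margin x n \<le> 1"
    using assms by (simp_all add: margin_pos margin_le_one)
  then have "16 * ln (8 * eta) \<le> (margin x n)\<^sup>2 * eta"
    using assms by (intro ln_le_linear_above_threshold) (auto simp: eta0_def power_le_one)
  then show ?thesis
    using \<open>margin x n > 0\<close> by (simp add: lambda_tilde_def field_simps power2_eq_square)
qed

theorem lemma2:
  fixes x :: "nat \<Rightarrow> real^2" and n :: nat and eta :: real and ws :: "real^2"
  assumes "n \<ge> 1"
    and "\<forall>i<n. norm (x i) \<le> 1"
    and "\<exists>w :: real^2. \<forall>i<n. w \<bullet> x i > 0"
    and "norm ws = 1"
    and "Min ((\<lambda>i. ws \<bullet> x i) ` {..<n}) = margin x n"
    and "eta > 0"
  shows "strict_mono (\<lambda>t. gd (logloss x n) eta t \<bullet> ws)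
    \<and> (eta \<ge> eta0 x n \<longrightarrow>
        (\<forall>t::nat. 1 \<le> t \<and> enat t \<le> tau x n eta \<longrightarrow>
            gd (logloss x n) eta t \<bullet> ws \<ge> margin x n * eta / 2 + margin x n * (real t - 1) / 16)
      \<and> (\<forall>t::nat. 1 \<le> t \<longrightarrow> gd (logloss x n) eta t \<bullet> ws \<ge> 8 * lambda_tilde x n eta))"
proof -
  let ?\<gamma> = "margin x n"
  have "?\<gamma> > 0" using assms by (simp add: margin_pos)
  have margin_ws: "\<forall>i<n. ?\<gamma> \<le> x i \<bullet> ws"
    using assms(5) by (metis Min_le finite_imageI finite_lessThan image_eqI inner_commute lessThan_iff)
  have mono: "strict_mono (\<lambda>t. gd (logloss x n) eta t \<bullet> ws)"
    using gd_logloss_inner_strict_mono margin_ws \<open>?\<gamma> > 0\<close> assms by blast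
  moreover have "8 * lambda_tilde x n eta \<le> gd (logloss x n) eta t \<bullet> ws"
    if "eta \<ge> eta0 x n" "1 \<le> t" for t
  proof -
    have "8 * lambda_tilde x n eta \<le> ?\<gamma> * eta / 2"
      using assms that by (intro eight_lambda_tilde_le)
    also have "\<dots> \<le> gd (logloss x n) eta 1 \<bullet> ws"
      using gd_logloss_inner_one_ge[OF assms(1) margin_ws] assms(6) by simp
    also have "\<dots> \<le> gd (logloss x n) eta t \<bullet> ws"
      using strict_mono_less_eq[OF mono, of 1 t] that by blast
    finally show ?thesis .
  qed
  moreover have "real n \<le> eta" if "eta \<ge> eta0 x n"
    using that by (simp add: eta0_def)
  ultimately show ?thesis
    using gd_logloss_inner_ge_until_tau[OF assms(1) margin_ws] \<open>?\<gamma> > 0\<close> by auto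
qed

end
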